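(* Let $q=3^{2n+1}$ and $q=q_0^r$ with $r\neq3$ an odd prime. Then for any subfield $\mathbb{F}_{q_1}$ of $\mathbb{F}_q$ there exists $\lambda\in\mathbb{F}_{q_0}$ such that $\mathrm{Tr}_{\mathbb{F}_q/\mathbb{F}_{q_1}}(\lambda)\in\mathbb{F}_{q_1}^\times$. In particular there exists $\lambda_1\in\mathbb{F}_{q_0}$ such that $\mathrm{Tr}_{\mathbb{F}_q/\mathbb{F}_{q_1}}(\lambda_1)=1$.
   Context: For $q=q_1^k$, $\mathrm{Tr}_{\mathbb{F}_q/\mathbb{F}_{q_1}}(x)=x+x^{q_1}+\dots+x^{q_1^{k-1}}$. *)

theory Defs
  imports "HOL-Computational_Algebra.Primes"
begin

definition is_subfield :: "'a::field set \<Rightarrow> bool" where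
  "is_subfield K \<longleftrightarrow> 0 \<in> K \<and> 1 \<in> K \<and>
     (\<forall>x\<in>K. \<forall>y\<in>K. x + y \<in> K \<and> x * y \<in> K) \<and>
     (\<forall>x\<in>K. - x \<in> K) \<and> (\<forall>x\<in>K. x \<noteq> 0 \<longrightarrow> inverse x \<in> K)"

text \<open>Relative trace Tr_{F_q/F_{q1}}(x) = x + x^q1 + ... + x^(q1^(k-1)), where q = q1^k.\<close>
definition rel_trace :: "nat \<Rightarrow> nat \<Rightarrow> 'a::field \<Rightarrow> 'a" where
  "rel_trace q1 k x = (\<Sum>i<k. x ^ (q1 ^ i))"

end

theory Submission
  imports Defs "HOL-Number_Theory.Residues" "HOL-Computational_Algebra.Polynomial"
begin

text \<open>
  Write |F| = 3^m, q0 = 3^s and |K1| = 3^d, so that s r = d k = m. On K0 = {x. x^(3^s) = x}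
  the power x^(3^(d i)) equals x^(3^(d i mod s)), so the trace restricted to K0 is a
  polynomial of degree < 3^s = |K0| whose linear coefficient is the number of i < k with
  s dvd d i. That number divides r, hence is prime to 3 since r \<noteq> 3 is prime; so the
  polynomial is nonzero and some \<lambda> \<in> K0 is not a root. The trace of \<lambda> is fixed by
  x \<mapsto> x^|K1| (Frobenius is additive), so it lies in K1; it also lies in K0, and dividing
  \<lambda> by it gives trace 1.
\<close>

lemma subfield_add: "is_subfield K \<Longrightarrow> x \<in> K \<Longrightarrow> y \<in> K \<Longrightarrow> x + y \<in> K"
  and subfield_mult: "is_subfield K \<Longrightarrow> x \<in> K \<Longrightarrow> y \<in> K \<Longrightarrow> x * y \<in> K"
  and subfield_inverse: "is_subfield K \<Longrightarrow> x \<in> K \<Longrightarrow> inverse x \<in> K"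
  by (auto simp: is_subfield_def)

lemma subfield_power: "is_subfield K \<Longrightarrow> x \<in> K \<Longrightarrow> x ^ n \<in> K"
  by (induction n) (auto simp: is_subfield_def)

lemma rel_trace_in_subfield:
  assumes "is_subfield K" "x \<in> K"
  shows "rel_trace q1 k x \<in> K"
  unfolding rel_trace_def
proof (induction k)
  case 0
  then show ?case using assms(1) by (simp add: is_subfield_def)
next
  case (Suc k)
  then show ?case using assms by (simp add: subfield_add subfield_power)
qed

lemma subfield_power_card:
  fixes K :: "'a::field set"
  assumes K: "is_subfield K" "finite K" and x: "x \<in> K"
  shows "x ^ card K = x"
proof (cases "x = 0")
  case True
  have "card K \<noteq> 0" using K x by auto
  then show ?thesis using True by simp
next
  case False
  have "(\<Prod>y\<in>K-{0}. x * y) = (\<Prod>y\<in>K-{0}. y)"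
    by (rule prod.reindex_bij_witness[of _ "\<lambda>y. y / x" "\<lambda>y. x * y"])
       (use False x K(1) in \<open>auto simp: divide_inverse subfield_mult subfield_inverse\<close>)
  moreover have "(\<Prod>y\<in>K-{0}. x * y) = x ^ card (K-{0}) * (\<Prod>y\<in>K-{0}. y)"
    by (simp add: prod.distrib)
  moreover have "(\<Prod>y\<in>K-{0}. y) \<noteq> 0" using K(2) by simp
  ultimately have "x ^ card (K-{0}) = 1" by simp
  moreover have "card K = Suc (card (K-{0}))"
    using K by (metis card_Suc_Diff1 is_subfield_def)
  ultimately show ?thesis by simp
qed

lemma degree_monom_minus_X:
  assumes "N \<ge> 2"
  shows "degree (monom (1::'a::field) N - [:0, 1:]) = N"
proof -
  have "degree (monom (1::'a) N - [:0, 1:]) = degree (monom (1::'a) N)"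
    unfolding diff_conv_add_uminus using assms
    by (intro degree_add_eq_left) (simp add: degree_monom_eq)
  then show ?thesis by (simp add: degree_monom_eq)
qed

lemma fixed_points_power_eq_roots:
  "{x::'a::field. x ^ N = x} = {x. poly (monom 1 N - [:0, 1:]) x = 0}"
  by (auto simp: poly_monom)

lemma finite_fixed_points_power:
  assumes "N \<ge> 2"
  shows "finite {x::'a::field. x ^ N = x}" and "card {x::'a. x ^ N = x} \<le> N"
proof -
  have nz: "monom (1::'a) N - [:0, 1:] \<noteq> 0"
    using degree_monom_minus_X[OF assms, where 'a='a] assms by auto
  show "finite {x::'a. x ^ N = x}"
    unfolding fixed_points_power_eq_roots using poly_roots_finite[OF nz] .
  show "card {x::'a. x ^ N = x} \<le> N"
    unfolding fixed_points_power_eq_roots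
    using card_poly_roots_bound[OF nz] degree_monom_minus_X[OF assms, where 'a='a] by simp
qed

lemma subfield_eq_fixed_points_power:
  fixes K :: "'a::field set"
  assumes K: "is_subfield K" "finite K"
  shows "K = {x. x ^ card K = x}"
proof -
  have sub: "K \<subseteq> {x. x ^ card K = x}" using subfield_power_card[OF K] by auto
  have "{0, 1} \<subseteq> K" using K(1) unfolding is_subfield_def by auto
  then have "card {0::'a, 1} \<le> card K" using K(2) by (intro card_mono)
  then have "card K \<ge> 2" by simp
  then show ?thesis
    using card_seteq[OF finite_fixed_points_power(1) sub] finite_fixed_points_power(2) by auto
qed

lemma power_eq_prime_powerE:
  fixes a p :: nat
  assumes "prime p" "a ^ k = p ^ m" "m > 0"
  obtains d where "a = p ^ d" "d * k = m"
proof -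
  have "k > 0" using assms by (metis gr0I one_less_power power_0 prime_gt_1_nat less_irrefl)
  then have "a dvd p ^ m" using assms(2) by (metis dvd_power)
  then obtain d where d: "a = p ^ d" using divides_primepow_nat[OF assms(1)] by auto
  then have "p ^ (d * k) = p ^ m" using assms(2) by (simp add: power_mult)
  then have "d * k = m" using assms(1) prime_power_inj by blast
  then show ?thesis using d that by blast
qed

lemma CHAR_eq_if_card_prime_power:
  assumes "prime p" "card (UNIV::'a::{field,finite} set) = p ^ m"
  shows "CHAR('a) = p"
proof -
  have "prime CHAR('a)" by (intro prime_CHAR_semidom finite_imp_CHAR_pos) simp
  moreover have "CHAR('a) dvd p ^ m" using CHAR_dvd_CARD[where 'a='a] assms(2) by simp
  ultimately show ?thesis
    using assms(1) prime_dvd_power primes_dvd_imp_eq by blast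
qed

lemma card_multiples_lessThan:
  fixes t u :: nat
  assumes "t > 0"
  shows "card {i\<in>{..<t * u}. t dvd i} = u"
proof -
  have "{i\<in>{..<t * u}. t dvd i} = (\<lambda>j. t * j) ` {..<u}"
  proof (intro equalityI subsetI)
    fix i assume "i \<in> {i\<in>{..<t * u}. t dvd i}"
    then obtain j where "i = t * j" "t * j < t * u" by auto
    then show "i \<in> (\<lambda>j. t * j) ` {..<u}" by auto
  qed (use assms in auto)
  moreover have "inj_on (\<lambda>j. t * j) {..<u}" using assms by (simp add: inj_on_def)
  ultimately show ?thesis by (simp add: card_image)
qed

lemma card_solutions_dvd_mult_dvd:
  fixes s d k r :: nat
  assumes "s > 0" "k * d = r * s"
  shows "card {i\<in>{..<k}. s dvd d * i} dvd r"
proof -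
  define g where "g = gcd d s"
  define t where "t = s div g"
  define e where "e = d div g"
  have "g > 0" using assms(1) by (simp add: g_def)
  have s: "s = t * g" and d: "d = e * g" by (simp_all add: t_def e_def g_def)
  have "t > 0" using assms(1) s by simp
  have "coprime t e" unfolding t_def e_def g_def
    using div_gcd_coprime[of d s] assms(1) by (simp add: ac_simps)
  have solutions: "s dvd d * i \<longleftrightarrow> t dvd i" for i
  proof -
    have "s dvd d * i \<longleftrightarrow> t dvd e * i" using \<open>g > 0\<close> by (simp add: s d ac_simps)
    also have "\<dots> \<longleftrightarrow> t dvd i" using \<open>coprime t e\<close> by (simp add: coprime_dvd_mult_right_iff)
    finally show ?thesis .
  qed
  have "k * e = r * t" using assms(2) \<open>g > 0\<close> by (simp add: s d)
  then have "t dvd k" using \<open>coprime t e\<close> by (metis coprime_dvd_mult_left_iff dvd_triv_right)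
  then obtain u where k: "k = t * u" by blast
  then have "u * e = r" using \<open>k * e = r * t\<close> \<open>t > 0\<close> by (simp add: ac_simps)
  moreover have "card {i\<in>{..<k}. s dvd d * i} = u"
    using card_multiples_lessThan[OF \<open>t > 0\<close>, of u] by (simp add: solutions k)
  ultimately show ?thesis by (metis dvd_triv_left)
qed

lemma power_prime_power_mod:
  fixes x :: "'a::monoid_mult"
  assumes "x ^ (p ^ s) = x"
  shows "x ^ (p ^ j) = x ^ (p ^ (j mod s))"
proof -
  have periodic: "x ^ (p ^ (s * a)) = x" for a
    by (induction a) (simp_all add: power_add power_mult assms)
  have "x ^ (p ^ j) = (x ^ (p ^ (s * (j div s)))) ^ (p ^ (j mod s))"
    by (metis div_mult_mod_eq mult.commute power_add power_mult)
  then show ?thesis by (simp add: periodic)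
qed

definition trace_poly :: "nat \<Rightarrow> nat \<Rightarrow> nat \<Rightarrow> nat \<Rightarrow> 'a::field poly" where
  "trace_poly p s d k = (\<Sum>i<k. monom 1 (p ^ ((d * i) mod s)))"

lemma poly_trace_poly:
  assumes "x ^ (p ^ s) = x"
  shows "poly (trace_poly p s d k) x = rel_trace (p ^ d) k x"
proof -
  have "poly (trace_poly p s d k) x = (\<Sum>i<k. x ^ (p ^ ((d * i) mod s)))"
    by (simp add: trace_poly_def poly_sum poly_monom)
  also have "\<dots> = (\<Sum>i<k. x ^ (p ^ (d * i)))"
    using power_prime_power_mod[OF assms] by simp
  finally show ?thesis by (simp add: rel_trace_def power_mult)
qed

lemma coeff_1_trace_poly:
  assumes "prime p"
  shows "coeff (trace_poly p s d k) 1 = of_nat (card {i\<in>{..<k}. s dvd d * i})"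
proof -
  have "p \<noteq> 1" using assms by auto
  then have "coeff (trace_poly p s d k) 1 = (\<Sum>i<k. of_bool (s dvd d * i))"
    using assms by (simp add: trace_poly_def coeff_sum coeff_monom dvd_eq_mod_eq_0 of_bool_def)
  then show ?thesis by (simp add: Int_def)
qed

lemma degree_trace_poly_less:
  assumes "prime p" "s > 0"
  shows "degree (trace_poly p s d k) < p ^ s"
  unfolding trace_poly_def
proof (intro degree_sum_less)
  fix i
  have "p ^ ((d * i) mod s) < p ^ s"
    using prime_gt_1_nat[OF assms(1)] assms(2) by simp
  then show "degree (monom (1::'a) (p ^ ((d * i) mod s))) < p ^ s"
    by (simp add: degree_monom_eq)
qed (use assms in \<open>simp add: prime_gt_0_nat\<close>)

lemma ex_not_root_if_degree_less_card:
  fixes P :: "'a::field poly"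
  assumes "P \<noteq> 0" "degree P < card A"
  shows "\<exists>x\<in>A. poly P x \<noteq> 0"
proof (rule ccontr)
  assume "\<not> (\<exists>x\<in>A. poly P x \<noteq> 0)"
  then have "A \<subseteq> {x. poly P x = 0}" by auto
  then have "card A \<le> card {x. poly P x = 0}"
    using poly_roots_finite[OF assms(1)] by (rule card_mono[rotated])
  then show False using card_poly_roots_bound[OF assms(1)] assms(2) by simp
qed

lemma rel_trace_power_CHAR_power:
  fixes x :: "'a::field"
  assumes "prime CHAR('a)" "Q = CHAR('a) ^ j"
  shows "rel_trace q k x ^ Q = rel_trace q k (x ^ Q)"
  unfolding rel_trace_def freshmans_dream_sum'[OF assms]
  by (simp flip: power_mult add: mult.commute)

lemma rel_trace_power_base_eq:
  fixes x :: "'a::field"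
  assumes "prime CHAR('a)" "q = CHAR('a) ^ d" "x ^ (q ^ k) = x"
  shows "rel_trace q k x ^ q = rel_trace q k x"
proof -
  let ?f = "\<lambda>i. x ^ (q ^ i)"
  have "rel_trace q k x ^ q = rel_trace q k (x ^ q)"
    by (rule rel_trace_power_CHAR_power[OF assms(1,2)])
  also have "\<dots> = (\<Sum>i<k. ?f (Suc i))"
    by (simp add: rel_trace_def flip: power_mult)
  also have "\<dots> = (\<Sum>i<k. ?f i)"
    using sum.lessThan_Suc_shift[of ?f k] sum.lessThan_Suc[of ?f k] assms(3) by (simp add: add.commute)
  finally show ?thesis by (simp add: rel_trace_def)
qed

lemma rel_trace_in_base_subfield:
  fixes K1 :: "'a::{field,finite} set"
  assumes "prime CHAR('a)" "is_subfield K1" "card K1 = CHAR('a) ^ d"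
    and "card K1 ^ k = card (UNIV::'a set)"
  shows "rel_trace (card K1) k x \<in> K1"
proof -
  have "x ^ (card K1 ^ k) = x"
    using subfield_power_card[of UNIV x] assms(4) by (simp add: is_subfield_def)
  then have "rel_trace (card K1) k x ^ card K1 = rel_trace (card K1) k x"
    using rel_trace_power_base_eq[OF assms(1,3)] by blast
  moreover have "K1 = {y. y ^ card K1 = y}"
    using subfield_eq_fixed_points_power[OF assms(2)] by simp
  ultimately show ?thesis by blast
qed

lemma rel_trace_mult_fixed:
  fixes mu x :: "'a::field"
  assumes "mu ^ q = mu"
  shows "rel_trace q k (mu * x) = mu * rel_trace q k x"
proof -
  have "mu ^ (q ^ i) = mu" for i
    by (induction i) (simp_all add: power_mult assms)
  then show ?thesis by (simp add: rel_trace_def power_mult_distrib sum_distrib_left)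
qed

lemma ex_rel_trace_nonzero:
  fixes K0 :: "'a::field set"
  assumes "prime p" "CHAR('a) = p"
    and "is_subfield K0" "card K0 = p ^ s" "s > 0"
    and "k * d = r * s" "\<not> p dvd r"
  shows "\<exists>x\<in>K0. rel_trace (p ^ d) k x \<noteq> 0"
proof -
  have "card K0 > 0" using assms(4) prime_gt_0_nat[OF assms(1)] by simp
  then have "finite K0" by (rule card_ge_0_finite)
  then have K0: "K0 = {x. x ^ (p ^ s) = x}"
    using subfield_eq_fixed_points_power[OF assms(3)] by (simp add: assms(4))
  define P :: "'a poly" where "P = trace_poly p s d k"
  have "\<not> p dvd card {i\<in>{..<k}. s dvd d * i}"
    using card_solutions_dvd_mult_dvd[OF assms(5,6)] assms(7) by (meson dvd_trans)
  moreover have "coeff P 1 = of_nat (card {i\<in>{..<k}. s dvd d * i})"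
    unfolding P_def by (rule coeff_1_trace_poly[OF assms(1)])
  ultimately have "coeff P 1 \<noteq> 0" by (simp add: of_nat_eq_0_iff_char_dvd assms(2))
  then have "P \<noteq> 0" by auto
  moreover have "degree P < card K0"
    using degree_trace_poly_less[OF assms(1,5)] by (simp add: P_def assms(4))
  ultimately obtain x where "x \<in> K0" "poly P x \<noteq> 0"
    using ex_not_root_if_degree_less_card by blast
  moreover from \<open>x \<in> K0\<close> have "x ^ (p ^ s) = x" using K0 by blast
  ultimately show ?thesis using poly_trace_poly unfolding P_def by metis
qed

lemma ex_rel_trace_eq_1:
  fixes K0 K1 :: "'a::field set"
  assumes "is_subfield K0" "is_subfield K1" "finite K1" "x \<in> K0"
    and "rel_trace (card K1) k x \<in> K1" "rel_trace (card K1) k x \<noteq> 0"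
  shows "\<exists>y\<in>K0. rel_trace (card K1) k y = 1"
proof -
  define T where "T = rel_trace (card K1) k x"
  have "T \<in> K0" using rel_trace_in_subfield[OF assms(1,4)] by (simp add: T_def)
  then have "inverse T * x \<in> K0" using assms(1,4) by (simp add: subfield_mult subfield_inverse)
  moreover have "inverse T ^ card K1 = inverse T"
    using subfield_power_card[OF assms(2,3)] subfield_inverse[OF assms(2)] assms(5) by (simp add: T_def)
  then have "rel_trace (card K1) k (inverse T * x) = 1"
    using assms(6) by (simp add: rel_trace_mult_fixed T_def)
  ultimately show ?thesis by blast
qed

theorem lemma4p3:
  fixes n r q0 :: nat
    and K0 :: "('a::{field,finite}) set"
  assumes "card (UNIV::'a set) = 3 ^ (2 * n + 1)"
    and "card (UNIV::'a set) = q0 ^ r"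
    and "prime r" and "odd r" and "r \<noteq> 3"
    and "is_subfield K0" and "card K0 = q0"
  shows "\<forall>(K1::'a set) k. is_subfield K1 \<and> card K1 ^ k = card (UNIV::'a set) \<longrightarrow>
           (\<exists>lam\<in>K0. rel_trace (card K1) k lam \<in> K1 \<and> rel_trace (card K1) k lam \<noteq> 0) \<and>
           (\<exists>lam1\<in>K0. rel_trace (card K1) k lam1 = 1)"
proof (intro allI impI)
  fix K1 :: "'a set" and k :: nat
  assume K1: "is_subfield K1 \<and> card K1 ^ k = card (UNIV::'a set)"
  define m where "m = 2 * n + 1"
  have card_UNIV: "card (UNIV::'a set) = 3 ^ m" and "m > 0" using assms(1) by (simp_all add: m_def)
  have "prime (3::nat)" by simp
  then have char: "CHAR('a) = 3" using CHAR_eq_if_card_prime_power card_UNIV by blast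
  have "q0 ^ r = 3 ^ m" using assms(2) card_UNIV by simp
  then obtain s where s: "q0 = 3 ^ s" "s * r = m"
    using power_eq_prime_powerE[OF \<open>prime 3\<close> _ \<open>m > 0\<close>] by blast
  have "card K1 ^ k = 3 ^ m" using K1 card_UNIV by simp
  then obtain d where d: "card K1 = 3 ^ d" "d * k = m"
    using power_eq_prime_powerE[OF \<open>prime 3\<close> _ \<open>m > 0\<close>] by blast
  have "\<not> 3 dvd r" using assms(3,5) \<open>prime 3\<close> primes_dvd_imp_eq by blast
  have "card K0 = 3 ^ s" "s > 0" "k * d = r * s"
    using assms(7) s d \<open>m > 0\<close> by (auto simp: mult.commute)
  then have "\<exists>x\<in>K0. rel_trace (3 ^ d) k x \<noteq> 0"
    using ex_rel_trace_nonzero[OF \<open>prime 3\<close> char assms(6)] \<open>\<not> 3 dvd r\<close> by blast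
  then obtain x where x: "x \<in> K0" "rel_trace (card K1) k x \<noteq> 0"
    unfolding d(1) by blast
  have "rel_trace (card K1) k x \<in> K1"
    using rel_trace_in_base_subfield[of K1 d] K1 char d(1) by simp
  then show "(\<exists>lam\<in>K0. rel_trace (card K1) k lam \<in> K1 \<and> rel_trace (card K1) k lam \<noteq> 0) \<and>
      (\<exists>lam1\<in>K0. rel_trace (card K1) k lam1 = 1)"
    using ex_rel_trace_eq_1[OF assms(6) _ finite] K1 x by blast
qed

end
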